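(* Let $f\in\mathbb{S}_d$ and let $\mathbb{V}\subseteq\mathbb{S}_d$ be a $\mathcal{T}$-invariant open set which contains the constant function $d^*(f)\mathbf{1}$. Then $\mathcal{Z}_tf\in\mathbb{V}$ for all sufficiently large real $t$.
   Context: $\mathbb{S}_d$ denotes the set of all $f\in L^\infty(\mathbb{R}^d)$ with $0\le f\le1$ almost everywhere, with the weak-* topology inherited from $L^\infty(\mathbb{R}^d)\simeq L^1(\mathbb{R}^d)^*$; $\mathbf{1}$ is the constant function $1$. For $v\in\mathbb{R}^d$, $\mathcal{T}_v\colon\mathbb{S}_d\to\mathbb{S}_d$ is $(\mathcal{T}_vf)(x)=f(x+v)$; for $t>0$, $\mathcal{Z}_t\colon\mathbb{S}_d\to\mathbb{S}_d$ is $(\mathcal{Z}_tf)(x)=f(tx)$. A set $B\subseteq\mathbb{S}_d$ is $\mathcal{T}$-invariant if $\mathcal{T}_vB=B$ for all $v\in\mathbb{R}^d$. With $m$ Lebesgue measure and $Q(v,t)$ the closed axis-parallel cube of centre $v$ and side $t$, the upper Banach density of $f\in\mathbb{S}_d$ is $d^*(f):=\limsup_{t\to\infty}\sup_{v\in\mathbb{R}^d}\frac{1}{m(Q(v,t))}\int_{Q(v,t)}f(x)\,dx$. *)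

theory Defs
  imports "HOL-Analysis.Analysis"
begin

text \<open>The set S_d: (representatives of) elements f of L-infinity(R^d) with 0 <= f <= 1 a.e.\<close>
definition Sd :: "('a::euclidean_space \<Rightarrow> real) set" where
  "Sd = {f. f \<in> borel_measurable lebesgue \<and> (AE x in lebesgue. 0 \<le> f x \<and> f x \<le> 1)}"

text \<open>The weak-* topology on S_d inherited from L-infinity = (L^1)^*: the initial topology
  of the pairings f |-> integral of f*g, g ranging over L^1(R^d).\<close>
definition weakstar :: "('a::euclidean_space \<Rightarrow> real) topology" where
  "weakstar = pullback_topology Sd
     (\<lambda>f. restrict (\<lambda>g. LINT x|lebesgue. f x * g x) {g. integrable lebesgue g})
     (product_topology (\<lambda>_. euclideanreal) {g::'a \<Rightarrow> real. integrable lebesgue g})"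

definition transl :: "'a::euclidean_space \<Rightarrow> ('a \<Rightarrow> real) \<Rightarrow> ('a \<Rightarrow> real)" where
  "transl v f = (\<lambda>x. f (x + v))"

definition dilate :: "real \<Rightarrow> ('a::euclidean_space \<Rightarrow> real) \<Rightarrow> ('a \<Rightarrow> real)" where
  "dilate t f = (\<lambda>x. f (t *\<^sub>R x))"

definition T_invariant :: "('a::euclidean_space \<Rightarrow> real) set \<Rightarrow> bool" where
  "T_invariant B \<longleftrightarrow> (\<forall>v. transl v ` B = B)"

definition cube :: "'a::euclidean_space \<Rightarrow> real \<Rightarrow> 'a set" where
  "cube v t = cbox (v - (t/2) *\<^sub>R One) (v + (t/2) *\<^sub>R One)"

definition upper_banach_density :: "('a::euclidean_space \<Rightarrow> real) \<Rightarrow> real" where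
  "upper_banach_density f = real_of_ereal (Limsup at_top (\<lambda>t::real.
      ereal (SUP v. (LINT x:cube v t|lebesgue. f x) / measure lebesgue (cube v t))))"

end

theory Submission
  imports Defs
begin

text \<open>
  Let \<open>c = d\<^sup>*(f)\<close>. For large \<open>t\<close>, all cubes of side at least \<open>t s\<close> have average of \<open>f\<close> at most
  \<open>c + \<delta>\<close>, while (since \<open>c\<close> is a limsup) some cube of side \<open>t L\<close> has average at least \<open>c - \<delta>\<close>.
  Translating that cube to the origin and rescaling by \<open>t\<close> gives a function \<open>h = f (y + t \<cdot>)\<close>
  that is nearly extremal: its averages are at most \<open>c + \<delta>\<close> on cubes of side \<open>\<ge> s\<close> and at
  least \<open>c - \<delta>\<close> on the cube of side \<open>L\<close> at the origin. Such functions converge weak-* to the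
  constant \<open>c\<close> as \<open>L \<rightarrow> \<infinity>\<close> and \<open>\<delta>, s \<rightarrow> 0\<close>: averaging the small-cube bound (Fubini) bounds
  the mass of \<open>h\<close> on a compact set \<open>K\<close> by \<open>(c + \<delta>)\<close> times the measure of a thin neighbourhood
  of \<open>K\<close>; applied to \<open>K\<close> inside a set \<open>A\<close> this bounds \<open>\<integral>\<^sub>A h\<close> from above, and applied to the
  complement of \<open>A\<close> in the dense cube of side \<open>L\<close> it bounds \<open>\<integral>\<^sub>A h\<close> from below. Hence the
  rescaled functions eventually lie in the weak-* open set \<open>V\<close>, and translation invariance of \<open>V\<close>
  removes the translation.
\<close>

section \<open>Cubes\<close>

lemma mem_cube: "x \<in> cube y s \<longleftrightarrow> (\<forall>b\<in>Basis. y \<bullet> b - s/2 \<le> x \<bullet> b \<and> x \<bullet> b \<le> y \<bullet> b + s/2)"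
  unfolding cube_def mem_box by (simp add: inner_simps)

lemma mem_cube_commute: "x \<in> cube y s \<longleftrightarrow> y \<in> cube x s"
  unfolding mem_cube by (meson add.commute diff_le_eq le_diff_eq)

lemma mem_cube_diff: "x \<in> cube y s \<longleftrightarrow> x - y \<in> cube 0 s"
  unfolding mem_cube by (rule ball_cong[OF refl]) (auto simp: inner_diff_left)

lemma center_mem_cube: "s \<ge> 0 \<Longrightarrow> y \<in> cube y s"
  unfolding mem_cube by auto

lemma cube_mono: "s \<le> s' \<Longrightarrow> cube y s \<subseteq> cube y s'"
  unfolding mem_cube subset_iff by (smt (verit, best) field_sum_of_halves)

lemma cube_subset_cube:
  assumes "x \<in> cube z (T - 2*l)" "l \<ge> 0"
  shows "cube x l \<subseteq> cube z T"
proof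
  fix u assume "u \<in> cube x l"
  with assms show "u \<in> cube z T" unfolding mem_cube by (fastforce simp: field_simps)
qed

lemma affine_mem_cube_iff:
  assumes "t > 0"
  shows "w + t *\<^sub>R x \<in> cube (w + t *\<^sub>R y) (t * \<sigma>) \<longleftrightarrow> x \<in> cube y \<sigma>"
proof -
  have "t * a - t * \<sigma> / 2 \<le> t * b \<longleftrightarrow> a - \<sigma> / 2 \<le> b"
    and "t * b \<le> t * a + t * \<sigma> / 2 \<longleftrightarrow> b \<le> a + \<sigma> / 2" for a b :: real
    using assms by (smt (verit, best) mult_le_cancel_left_pos right_diff_distrib distrib_left
        times_divide_eq_right)+
  then show ?thesis
    unfolding mem_cube by (simp add: inner_simps)
qed

lemma ball_subset_cube: "ball y r \<subseteq> cube y (2 * r)"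
proof
  fix x assume "x \<in> ball y r"
  then have "\<bar>(x - y) \<bullet> b\<bar> < r" if "b \<in> Basis" for b
    using Basis_le_norm[OF that, of "x - y"] by (simp add: dist_norm norm_minus_commute)
  then show "x \<in> cube y (2 * r)"
    unfolding mem_cube by (force simp: inner_diff_left abs_less_iff)
qed

lemma ex_nat_mem_cube: "\<exists>k::nat. x \<in> cube (0::'a::euclidean_space) k"
proof -
  obtain k :: nat where k: "2 * norm x \<le> k" using real_arch_simple by blast
  have "\<bar>x \<bullet> b\<bar> \<le> norm x" if "b \<in> Basis" for b :: 'a using that by (rule Basis_le_norm)
  with k have "x \<in> cube 0 k" unfolding mem_cube by force
  then show ?thesis ..
qed

lemma cube_sets_borel [measurable]: "cube y s \<in> sets borel"
  unfolding cube_def by simp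

lemma compact_cube: "compact (cube y s)"
  unfolding cube_def by simp

lemma emeasure_cube: "s \<ge> 0 \<Longrightarrow> emeasure lborel (cube (y::'a::euclidean_space) s) = ennreal (s ^ DIM('a))"
  unfolding cube_def emeasure_lborel_cbox_eq by (simp add: inner_simps prod_constant)

lemma measure_cube: "s \<ge> 0 \<Longrightarrow> measure lborel (cube (y::'a::euclidean_space) s) = s ^ DIM('a)"
  unfolding cube_def measure_lborel_cbox_eq by (simp add: inner_simps prod_constant)

lemma measure_lebesgue_cube: "s \<ge> 0 \<Longrightarrow> measure lebesgue (cube (y::'a::euclidean_space) s) = s ^ DIM('a)"
  using measure_cube[of s y] by simp

lemma emeasure_cube_finite: "emeasure lborel (cube y s) < \<infinity>"
  using compact_cube by (rule emeasure_compact_finite)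

lemma cube_lmeasurable: "cube y s \<in> lmeasurable"
  unfolding cube_def by simp

section \<open>Averaging over small cubes\<close>

lemma nn_integral_cube_Fubini:
  fixes h :: "'a::euclidean_space \<Rightarrow> real"
  assumes [measurable]: "h \<in> borel_measurable borel" "E \<in> sets borel"
  shows "(\<integral>\<^sup>+y. indicator E y * (\<integral>\<^sup>+x. ennreal (h x) * indicator (cube y s) x \<partial>lborel) \<partial>lborel)
       = (\<integral>\<^sup>+x. ennreal (h x) * emeasure lborel (E \<inter> cube x s) \<partial>lborel)"
proof -
  have shift: "indicator (cube 0 s) (x - y) = (indicator (cube y s) x :: ennreal)"
    and swap: "indicator (cube 0 s) (x - y) = (indicator (cube x s) y :: ennreal)" for x y
    using mem_cube_diff[of x y s] mem_cube_commute[of x y s] by (simp_all add: indicator_def)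
  have "(\<integral>\<^sup>+y. indicator E y * (\<integral>\<^sup>+x. ennreal (h x) * indicator (cube y s) x \<partial>lborel) \<partial>lborel)
      = (\<integral>\<^sup>+y. (\<integral>\<^sup>+x. indicator E y * (ennreal (h x) * indicator (cube 0 s) (x - y)) \<partial>lborel) \<partial>lborel)"
    by (rule nn_integral_cong, subst nn_integral_cmult[symmetric]) (measurable, simp only: shift)
  also have "\<dots> = (\<integral>\<^sup>+x. (\<integral>\<^sup>+y. indicator E y * (ennreal (h x) * indicator (cube 0 s) (x - y)) \<partial>lborel) \<partial>lborel)"
    by (rule lborel_pair.Fubini') measurable
  also have "\<dots> = (\<integral>\<^sup>+x. ennreal (h x) * (\<integral>\<^sup>+y. indicator (E \<inter> cube x s) y \<partial>lborel) \<partial>lborel)"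
    by (rule nn_integral_cong, subst nn_integral_cmult[symmetric]) (measurable, simp only: swap indicator_inter_arith mult_ac)
  finally show ?thesis by simp
qed

text \<open>Integrate the bound over the centres \<open>y \<in> E\<close>: by Fubini every \<open>x \<in> A\<close> is then counted
  with weight \<open>s\<^sup>n\<close>, the measure of the centres \<open>y \<in> cube x s \<subseteq> E\<close>.\<close>

lemma nn_integral_le_of_cube_bound:
  fixes h :: "'a::euclidean_space \<Rightarrow> real"
  assumes [measurable]: "h \<in> borel_measurable borel" "A \<in> sets borel" "E \<in> sets borel"
    and "s > 0" "\<beta> \<ge> 0"
    and bound: "\<And>y. (\<integral>\<^sup>+x. ennreal (h x) * indicator (cube y s) x \<partial>lborel) \<le> ennreal (\<beta> * s ^ DIM('a))"
    and cubes_in_E: "\<And>x. x \<in> A \<Longrightarrow> cube x s \<subseteq> E"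
  shows "(\<integral>\<^sup>+x. ennreal (h x) * indicator A x \<partial>lborel) \<le> ennreal \<beta> * emeasure lborel E"
proof -
  let ?n = "DIM('a)"
  have "ennreal (s ^ ?n) * (\<integral>\<^sup>+x. ennreal (h x) * indicator A x \<partial>lborel)
      = (\<integral>\<^sup>+x. ennreal (h x) * (indicator A x * ennreal (s ^ ?n)) \<partial>lborel)"
    by (subst nn_integral_cmult[symmetric]) (auto intro!: nn_integral_cong simp: mult_ac)
  also have "\<dots> \<le> (\<integral>\<^sup>+x. ennreal (h x) * emeasure lborel (E \<inter> cube x s) \<partial>lborel)"
  proof (intro nn_integral_mono mult_left_mono)
    fix x
    show "indicator A x * ennreal (s ^ ?n) \<le> emeasure lborel (E \<inter> cube x s)"
      using cubes_in_E[of x] \<open>s > 0\<close> by (cases "x \<in> A") (simp_all add: Int_absorb1 emeasure_cube)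
  qed simp
  also have "\<dots> = (\<integral>\<^sup>+y. indicator E y * (\<integral>\<^sup>+x. ennreal (h x) * indicator (cube y s) x \<partial>lborel) \<partial>lborel)"
    by (rule nn_integral_cube_Fubini[symmetric]) auto
  also have "\<dots> \<le> (\<integral>\<^sup>+y. ennreal (\<beta> * s ^ ?n) * indicator E y \<partial>lborel)"
    using bound by (intro nn_integral_mono) (simp add: indicator_def mult.commute)
  also have "\<dots> = ennreal (s ^ ?n) * (ennreal \<beta> * emeasure lborel E)"
    using assms by (subst nn_integral_cmult_indicator) (auto simp: ennreal_mult mult_ac)
  finally show ?thesis
    using \<open>s > 0\<close> by (subst (asm) ennreal_mult_le_mult_iff) auto
qed

definition cube_nbhd :: "'a::euclidean_space set \<Rightarrow> real \<Rightarrow> 'a set" where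
  "cube_nbhd C s = {x + y | x y. x \<in> C \<and> y \<in> cube 0 s}"

lemma compact_cube_nbhd: "compact C \<Longrightarrow> compact (cube_nbhd C s)"
  unfolding cube_nbhd_def by (rule compact_sums) (auto simp: compact_cube)

lemma cube_subset_cube_nbhd:
  assumes "x \<in> C"
  shows "cube x s \<subseteq> cube_nbhd C s"
proof
  fix z assume "z \<in> cube x s"
  then have "z = x + (z - x)" "z - x \<in> cube 0 s" using mem_cube_diff[of z x s] by auto
  with assms show "z \<in> cube_nbhd C s" unfolding cube_nbhd_def by blast
qed

lemma cube_nbhd_mono: "s \<le> s' \<Longrightarrow> cube_nbhd C s \<subseteq> cube_nbhd C s'"
  unfolding cube_nbhd_def using cube_mono[of s s' 0] by blast

lemma norm_le_of_mem_cube: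
  fixes s :: real
  assumes "y \<in> cube (0::'a::euclidean_space) s"
  shows "norm y \<le> DIM('a) * s"
proof -
  have "norm y \<le> (\<Sum>b\<in>Basis. \<bar>y \<bullet> b\<bar>)" by (rule norm_le_l1)
  also have "\<dots> \<le> (\<Sum>b\<in>(Basis::'a set). s)"
    using assms unfolding mem_cube by (intro sum_mono) fastforce
  finally show ?thesis by simp
qed

lemma Inter_cube_nbhd:
  assumes "closed C"
  shows "(\<Inter>m. cube_nbhd C (1 / Suc m)) = C"
proof (intro equalityI subsetI)
  fix z assume z: "z \<in> (\<Inter>m. cube_nbhd C (1 / Suc m))"
  show "z \<in> C"
  proof (rule ccontr)
    assume "z \<notin> C"
    with assms obtain r where r: "r > 0" "ball z r \<subseteq> - C"
      using open_contains_ball[of "- C"] by (auto simp: closed_def)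
    obtain m :: nat where m: "DIM('a) / r < m"
      using reals_Archimedean2 by blast
    from z have "z \<in> cube_nbhd C (1 / Suc m)" by blast
    then obtain x y where xy: "z = x + y" "x \<in> C" "y \<in> cube 0 (1 / Suc m)"
      unfolding cube_nbhd_def by blast
    have "norm y \<le> DIM('a) / Suc m"
      using norm_le_of_mem_cube[OF xy(3)] by simp
    also have "\<dots> < r"
    proof -
      have "real DIM('a) < m * r" using m r(1) by (simp add: pos_divide_less_eq)
      also have "\<dots> < Suc m * r" using r(1) by simp
      finally show ?thesis by (simp add: pos_divide_less_eq mult.commute del: of_nat_Suc)
    qed
    finally have "x \<in> ball z r"
      by (simp add: xy(1) dist_norm)
    with r xy show False by blast
  qed
next
  fix z assume "z \<in> C"
  then have "z \<in> cube_nbhd C s" if "s \<ge> 0" for s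
    using cube_subset_cube_nbhd center_mem_cube that by blast
  then show "z \<in> (\<Inter>m. cube_nbhd C (1 / Suc m))" by simp
qed

lemma measure_cube_nbhd_le:
  fixes C :: "'a::euclidean_space set"
  assumes "compact C" "e > 0"
  shows "\<exists>s>0. measure lborel (cube_nbhd C s) \<le> measure lborel C + e"
proof -
  define S where "S m = cube_nbhd C (1 / Suc m)" for m :: nat
  have compact: "compact (S m)" for m
    unfolding S_def using assms(1) by (rule compact_cube_nbhd)
  have "decseq S"
    unfolding decseq_def S_def by (intro allI impI cube_nbhd_mono) (simp add: frac_le)
  moreover have "range S \<subseteq> sets lborel"
    using compact by (auto intro: borel_compact)
  moreover have "emeasure lborel (S m) \<noteq> \<infinity>" for m
    using emeasure_compact_finite[OF compact] by (simp add: less_top)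
  ultimately have "(\<lambda>m. measure lborel (S m)) \<longlonglongrightarrow> measure lborel (\<Inter>m. S m)"
    by (intro Lim_measure_decseq)
  then have "(\<lambda>m. measure lborel (S m)) \<longlonglongrightarrow> measure lborel C"
    using Inter_cube_nbhd[OF compact_imp_closed[OF assms(1)]] by (simp add: S_def)
  then have "\<forall>\<^sub>F m in sequentially. measure lborel (S m) < measure lborel C + e"
    using assms(2) by (intro order_tendstoD) auto
  then obtain m where "measure lborel (S m) < measure lborel C + e"
    by (auto dest: eventually_happens)
  then show ?thesis
    unfolding S_def by (intro exI[of _ "1 / Suc m"]) simp
qed

section \<open>Upper Banach density of a function with values in \<open>[0,1]\<close>\<close>

lemma less_Limsup_frequently:
  fixes f :: "_ \<Rightarrow> 'a::complete_linorder"
  assumes "a < Limsup F f"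
  shows "\<exists>\<^sub>F x in F. a < f x"
proof (rule ccontr)
  assume "\<not> (\<exists>\<^sub>F x in F. a < f x)"
  then have "Limsup F f \<le> a"
    by (intro Limsup_bounded) (simp add: not_frequently not_less)
  with assms show False by simp
qed

lemma power_diff_ge_Bernoulli:
  fixes T a :: real
  assumes "T > 0" "0 \<le> a" "a \<le> T"
  shows "T ^ n * (1 - real n * (a / T)) \<le> (T - a) ^ n"
proof -
  have "T ^ n * (1 + real n * (- (a / T))) \<le> T ^ n * (1 + (- (a / T))) ^ n"
    using assms by (intro mult_left_mono Bernoulli_inequality) auto
  also have "\<dots> = (T - a) ^ n"
    using assms by (simp add: power_mult_distrib[symmetric] field_simps)
  finally show ?thesis by simp
qed

text \<open>Everywhere bounded Borel representatives of the elements of \<open>Sd\<close>.\<close>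

locale unit_density =
  fixes h :: "'a::euclidean_space \<Rightarrow> real"
  assumes borel_measurable [measurable]: "h \<in> borel_measurable borel"
    and nonneg: "\<And>x. 0 \<le> h x" and le_one: "\<And>x. h x \<le> 1"
begin

lemma lebesgue_measurable [measurable]: "h \<in> borel_measurable lebesgue"
  using borel_measurable by (simp add: measurable_completion)

lemma in_Sd: "h \<in> Sd"
  unfolding Sd_def using nonneg le_one by simp

lemma integrable_mult:
  assumes "integrable lebesgue g"
  shows "integrable lebesgue (\<lambda>x. h x * g x)"
  using assms by (rule Bochner_Integration.integrable_bound)
    (use borel_measurable_integrable[OF assms] nonneg le_one
      in \<open>auto simp: abs_mult intro!: mult_left_le_one_le\<close>)

lemma set_integrable: "emeasure lebesgue E < \<infinity> \<Longrightarrow> E \<in> sets lebesgue \<Longrightarrow> set_integrable lebesgue E h"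
  unfolding set_integrable_def
  by (rule integrableI_bounded_set_indicator[where B=1]) (auto simp: nonneg le_one)

lemma set_integral_nonneg: "0 \<le> (LINT x:E|lebesgue. h x)"
  unfolding set_lebesgue_integral_def by (rule integral_nonneg_AE) (simp add: nonneg)

lemma set_integral_le_measure:
  assumes "E \<in> sets lebesgue" "emeasure lebesgue E < \<infinity>"
  shows "(LINT x:E|lebesgue. h x) \<le> measure lebesgue E"
proof -
  have "(LINT x:E|lebesgue. h x) \<le> (LINT x:E|lebesgue. 1)"
    using assms set_integrable by (intro set_integral_mono) (auto simp: le_one set_integrable_def)
  also have "\<dots> = measure lebesgue E"
    using assms by (subst set_integral_const) auto
  finally show ?thesis .
qed

lemma set_integral_Diff:
  assumes "F \<in> sets lebesgue" "emeasure lebesgue F < \<infinity>" "E \<in> sets lebesgue" "E \<subseteq> F"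
  shows "(LINT x:F|lebesgue. h x) = (LINT x:E|lebesgue. h x) + (LINT x:F - E|lebesgue. h x)"
proof -
  have "emeasure lebesgue E < \<infinity>" "emeasure lebesgue (F - E) < \<infinity>"
    using assms emeasure_mono[of _ F lebesgue] by (meson Diff_subset le_less_trans)+
  moreover have "F = E \<union> (F - E)" using assms by auto
  ultimately show ?thesis
    using assms set_integrable by (metis set_integral_Un Diff_disjoint sets.Diff)
qed

lemma nn_integral_eq_set_integral:
  assumes [measurable]: "E \<in> sets borel" and "emeasure lborel E < \<infinity>"
  shows "(\<integral>\<^sup>+x. ennreal (h x) * indicator E x \<partial>lborel) = ennreal (LINT x:E|lebesgue. h x)"
proof -
  have integrable: "integrable lborel (\<lambda>x. indicator E x *\<^sub>R h x)"
    using assms by (intro integrableI_bounded_set_indicator[where B=1]) (auto simp: nonneg le_one)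
  have "(\<integral>\<^sup>+x. ennreal (h x) * indicator E x \<partial>lborel) = (\<integral>\<^sup>+x. ennreal (indicator E x *\<^sub>R h x) \<partial>lborel)"
    by (rule nn_integral_cong) (simp add: indicator_def)
  also have "\<dots> = ennreal (LINT x:E|lborel. h x)"
    unfolding set_lebesgue_integral_def using integrable by (rule nn_integral_eq_integral) (simp add: nonneg)
  also have "(LINT x:E|lborel. h x) = (LINT x:E|lebesgue. h x)"
    unfolding set_lebesgue_integral_def by (rule integral_completion[symmetric]) measurable
  finally show ?thesis .
qed

lemma set_integral_le_of_cube_bound:
  assumes "s > 0" "\<beta> \<ge> 0"
    and bound: "\<And>y. (LINT x:cube y s|lebesgue. h x) \<le> \<beta> * s ^ DIM('a)"
    and [measurable]: "A \<in> sets borel" "E \<in> sets borel" and "emeasure lborel E < \<infinity>"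
    and cubes_in_E: "\<And>x. x \<in> A \<Longrightarrow> cube x s \<subseteq> E"
  shows "(LINT x:A|lebesgue. h x) \<le> \<beta> * measure lborel E"
proof -
  have "A \<subseteq> E"
    using cubes_in_E center_mem_cube \<open>s > 0\<close> by (meson less_imp_le subsetD subsetI)
  then have "emeasure lborel A < \<infinity>"
    using assms emeasure_mono[of A E lborel] by (auto intro: le_less_trans)
  then have "ennreal (LINT x:A|lebesgue. h x) = (\<integral>\<^sup>+x. ennreal (h x) * indicator A x \<partial>lborel)"
    by (simp add: nn_integral_eq_set_integral)
  also have "\<dots> \<le> ennreal \<beta> * emeasure lborel E"
  proof (rule nn_integral_le_of_cube_bound[OF borel_measurable])
    show "(\<integral>\<^sup>+x. ennreal (h x) * indicator (cube y s) x \<partial>lborel) \<le> ennreal (\<beta> * s ^ DIM('a))" for y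
      using bound[of y] \<open>s > 0\<close> by (simp add: nn_integral_eq_set_integral emeasure_cube ennreal_leI)
  qed (use assms in auto)
  also have "\<dots> = ennreal (\<beta> * measure lborel E)"
    using assms by (simp add: emeasure_eq_ennreal_measure ennreal_mult less_top)
  finally show ?thesis
    using \<open>\<beta> \<ge> 0\<close> by (simp add: ennreal_le_iff)
qed

lemma set_integral_cube_le: "(LINT x:cube y s|lebesgue. h x) \<le> measure lebesgue (cube y s)"
  using cube_lmeasurable[of y s] by (intro set_integral_le_measure) (auto simp: fmeasurable_def)

lemma cube_average_le_one:
  "T > 0 \<Longrightarrow> (LINT x:cube v T|lebesgue. h x) / measure lebesgue (cube v T) \<le> 1"
  using set_integral_cube_le[of v T] measure_lebesgue_cube[of T v] by simp

lemma bdd_above_cube_average: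
  "T > 0 \<Longrightarrow> bdd_above (range (\<lambda>v. (LINT x:cube v T|lebesgue. h x) / measure lebesgue (cube v T)))"
  using cube_average_le_one by (intro bdd_aboveI[of _ 1]) auto

definition max_cube_average :: "real \<Rightarrow> real" where
  "max_cube_average T = (SUP v. (LINT x:cube v T|lebesgue. h x) / measure lebesgue (cube v T))"

lemma cube_average_le_max:
  "T > 0 \<Longrightarrow> (LINT x:cube v T|lebesgue. h x) / measure lebesgue (cube v T) \<le> max_cube_average T"
  unfolding max_cube_average_def by (rule cSUP_upper[OF _ bdd_above_cube_average]) simp_all

lemma max_cube_average_bounds:
  assumes "T > 0"
  shows "0 \<le> max_cube_average T \<and> max_cube_average T \<le> 1"
proof
  show "0 \<le> max_cube_average T"
    using cube_average_le_max[OF assms, of 0] set_integral_nonneg[of "cube 0 T"]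
    by (meson divide_nonneg_nonneg measure_nonneg order_trans)
  show "max_cube_average T \<le> 1"
    unfolding max_cube_average_def using assms by (intro cSUP_least cube_average_le_one) auto
qed

lemma Limsup_max_cube_average:
  "Limsup at_top (\<lambda>T. ereal (max_cube_average T)) = ereal (upper_banach_density h)"
  and upper_banach_density_bounds: "0 \<le> upper_banach_density h" "upper_banach_density h \<le> 1"
proof -
  let ?L = "Limsup at_top (\<lambda>T. ereal (max_cube_average T))"
  have bounds: "\<forall>\<^sub>F T in at_top. 0 \<le> ereal (max_cube_average T) \<and> ereal (max_cube_average T) \<le> 1"
    using eventually_gt_at_top[of 0] by eventually_elim (simp add: max_cube_average_bounds)
  have "0 \<le> ?L"
    by (rule le_Limsup) (use bounds in \<open>auto elim: eventually_mono\<close>)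
  moreover have "?L \<le> 1"
    by (rule Limsup_bounded) (use bounds in \<open>auto elim: eventually_mono\<close>)
  moreover have "upper_banach_density h = real_of_ereal ?L"
    unfolding upper_banach_density_def max_cube_average_def ..
  ultimately show "?L = ereal (upper_banach_density h)"
    "0 \<le> upper_banach_density h" "upper_banach_density h \<le> 1"
    by (cases ?L; simp)+
qed

lemma eventually_cube_integral_le:
  assumes "\<delta> > 0"
  shows "\<forall>\<^sub>F T in at_top. \<forall>v. (LINT x:cube v T|lebesgue. h x) \<le> (upper_banach_density h + \<delta>) * T ^ DIM('a)"
proof -
  have "Limsup at_top (\<lambda>T. ereal (max_cube_average T)) < ereal (upper_banach_density h + \<delta>)"
    using assms by (simp add: Limsup_max_cube_average)
  then have "\<forall>\<^sub>F T in at_top. max_cube_average T < upper_banach_density h + \<delta>"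
    by (auto dest: Limsup_lessD)
  with eventually_gt_at_top[of 0] show ?thesis
  proof eventually_elim
    case (elim T)
    show ?case
    proof
      fix v
      have "(LINT x:cube v T|lebesgue. h x) / T ^ DIM('a) \<le> upper_banach_density h + \<delta>"
        using cube_average_le_max[of T v] measure_lebesgue_cube[of T v] elim by simp
      then show "(LINT x:cube v T|lebesgue. h x) \<le> (upper_banach_density h + \<delta>) * T ^ DIM('a)"
        using elim by (simp add: divide_le_eq)
    qed
  qed
qed

lemma frequently_cube_integral_gt:
  assumes "\<delta> > 0"
  shows "\<exists>\<^sub>F T in at_top. \<exists>z. (upper_banach_density h - \<delta>) * T ^ DIM('a) < (LINT x:cube z T|lebesgue. h x)"
proof -
  have "ereal (upper_banach_density h - \<delta>) < Limsup at_top (\<lambda>T. ereal (max_cube_average T))"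
    using assms by (simp add: Limsup_max_cube_average)
  then have "\<exists>\<^sub>F T in at_top. upper_banach_density h - \<delta> < max_cube_average T"
    by (auto dest: less_Limsup_frequently)
  then have "\<exists>\<^sub>F T in at_top. 0 < T \<and> upper_banach_density h - \<delta> < max_cube_average T"
    using eventually_gt_at_top[of "0::real"] by (rule frequently_eventually_conj)
  moreover have "\<exists>z. (upper_banach_density h - \<delta>) * T ^ DIM('a) < (LINT x:cube z T|lebesgue. h x)"
    if "0 < T" "upper_banach_density h - \<delta> < max_cube_average T" for T
  proof -
    have "bdd_above (range (\<lambda>v. (LINT x:cube v T|lebesgue. h x) / measure lebesgue (cube v T)))"
      using that by (intro bdd_above_cube_average)
    with that obtain z where "upper_banach_density h - \<delta> < (LINT x:cube z T|lebesgue. h x) / measure lebesgue (cube z T)"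
      unfolding max_cube_average_def by (auto simp: less_cSUP_iff)
    then show ?thesis
      using that measure_lebesgue_cube[of T z] by (auto simp: less_divide_eq)
  qed
  ultimately show ?thesis
    by (auto elim: frequently_elim1)
qed

text \<open>If all subcubes of side \<open>l\<close> were sparser, averaging them over the inner cube
  \<open>cube z (T - 2*l)\<close> would bound its mass, and the boundary layer of relative measure
  \<open>\<le> 2 n l / T\<close> (Bernoulli) is too thin to make up the difference.\<close>

lemma ex_subcube_integral_ge:
  fixes l :: real
  assumes T: "T > 0" and l: "l > 0" "2*l \<le> T"
    and dense: "\<alpha> * T ^ DIM('a) \<le> (LINT x:cube z T|lebesgue. h x)"
  shows "\<exists>y. (\<alpha> - 3 * DIM('a) * l / T) * l ^ DIM('a) \<le> (LINT x:cube y l|lebesgue. h x)"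
proof (rule ccontr)
  let ?n = "DIM('a)"
  define \<alpha>' where "\<alpha>' = \<alpha> - 3 * ?n * l / T"
  define A where "A = cube z (T - 2*l)"
  assume "\<not> ?thesis"
  then have small: "(LINT x:cube y l|lebesgue. h x) \<le> \<alpha>' * l ^ ?n" for y
    unfolding \<alpha>'_def by (simp add: not_le less_imp_le)
  have "0 \<le> \<alpha>' * l ^ ?n"
    using small[of z] set_integral_nonneg[of "cube z l"] by linarith
  then have "\<alpha>' \<ge> 0"
    by (meson l(1) mult_neg_pos not_le zero_less_power)
  then have "(LINT x:A|lebesgue. h x) \<le> \<alpha>' * measure lborel (cube z T)"
    by (rule set_integral_le_of_cube_bound[OF l(1) _ small])
      (use l emeasure_cube_finite in \<open>auto simp: A_def cube_subset_cube\<close>)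
  then have inner: "(LINT x:A|lebesgue. h x) \<le> \<alpha>' * T ^ ?n"
    using T by (simp add: measure_cube)
  have "A \<subseteq> cube z T"
    unfolding A_def using l by (intro cube_mono) simp
  then have "(LINT x:cube z T|lebesgue. h x) = (LINT x:A|lebesgue. h x) + (LINT x:cube z T - A|lebesgue. h x)"
    using cube_lmeasurable[of z T] by (intro set_integral_Diff) (auto simp: A_def fmeasurable_def)
  moreover have "(LINT x:cube z T - A|lebesgue. h x) \<le> T ^ ?n - (T - 2*l) ^ ?n"
  proof -
    have "cube z T - A \<in> lmeasurable" "A \<in> lmeasurable"
      using cube_lmeasurable by (auto simp: A_def)
    then have "(LINT x:cube z T - A|lebesgue. h x) \<le> measure lebesgue (cube z T - A)"
      by (intro set_integral_le_measure) (auto simp: fmeasurable_def)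
    also have "\<dots> = T ^ ?n - (T - 2*l) ^ ?n"
      using \<open>A \<subseteq> cube z T\<close> \<open>A \<in> lmeasurable\<close> cube_lmeasurable[of z T] T l
      by (simp add: measurable_measure_Diff fmeasurable_def A_def measure_cube)
    finally show ?thesis .
  qed
  moreover have "T ^ ?n * (1 - ?n * (2*l / T)) \<le> (T - 2*l) ^ ?n"
    using T l by (intro power_diff_ge_Bernoulli) auto
  ultimately have "\<alpha> * T ^ ?n \<le> \<alpha>' * T ^ ?n + T ^ ?n * (?n * (2*l / T))"
    using dense inner by (simp add: algebra_simps)
  also have "\<dots> = \<alpha> * T ^ ?n - T ^ ?n * (?n * l / T)"
    unfolding \<alpha>'_def by (simp add: algebra_simps)
  finally have "T ^ ?n * (?n * l / T) \<le> 0"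
    by simp
  moreover have "T ^ ?n * (?n * l / T) > 0"
    using T l by (intro mult_pos_pos divide_pos_pos) (auto simp: DIM_positive)
  ultimately show False by linarith
qed

lemma ex_cube_integral_ge:
  fixes l :: real
  assumes "l > 0" "\<delta> > 0"
  shows "\<exists>y. (upper_banach_density h - \<delta>) * l ^ DIM('a) \<le> (LINT x:cube y l|lebesgue. h x)"
proof -
  let ?n = "DIM('a)" and ?c = "upper_banach_density h"
  have "\<exists>\<^sub>F T in at_top. max (2*l) (6 * ?n * l / \<delta>) \<le> T \<and>
      (\<exists>z. (?c - \<delta>/2) * T ^ ?n < (LINT x:cube z T|lebesgue. h x))"
    using assms by (intro frequently_eventually_conj frequently_cube_integral_gt eventually_ge_at_top) simp
  then obtain T z where T: "max (2*l) (6 * ?n * l / \<delta>) \<le> T"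
    and z: "(?c - \<delta>/2) * T ^ ?n < (LINT x:cube z T|lebesgue. h x)"
    by (auto dest: frequently_ex)
  have "T > 0" "2*l \<le> T"
    using T assms by auto
  have "3 * ?n * l / T \<le> \<delta>/2"
    using T \<open>T > 0\<close> \<open>\<delta> > 0\<close> by (simp add: pos_divide_le_eq mult.commute)
  obtain y where y: "(?c - \<delta>/2 - 3 * ?n * l / T) * l ^ ?n \<le> (LINT x:cube y l|lebesgue. h x)"
    using ex_subcube_integral_ge[OF \<open>T > 0\<close> \<open>l > 0\<close> \<open>2*l \<le> T\<close>] z by (meson less_imp_le)
  have "(?c - \<delta>) * l ^ ?n \<le> (?c - \<delta>/2 - 3 * ?n * l / T) * l ^ ?n"
    using \<open>3 * ?n * l / T \<le> \<delta>/2\<close> \<open>l > 0\<close> by (intro mult_right_mono) auto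
  with y show ?thesis by (meson order_trans)
qed

end

section \<open>Nearly extremal functions converge weak-* to a constant\<close>

definition near_extremal :: "real \<Rightarrow> ('a::euclidean_space \<Rightarrow> real) \<Rightarrow> real \<Rightarrow> real \<Rightarrow> real \<Rightarrow> bool" where
  "near_extremal c h L \<delta> s \<longleftrightarrow> unit_density h \<and> L \<ge> 0 \<and>
     (\<forall>y. \<forall>\<sigma>\<ge>s. (LINT x:cube y \<sigma>|lebesgue. h x) \<le> (c + \<delta>) * \<sigma> ^ DIM('a)) \<and>
     (c - \<delta>) * L ^ DIM('a) \<le> (LINT x:cube 0 L|lebesgue. h x)"

lemma near_extremal_mono:
  assumes "near_extremal c h L \<delta> s" "\<delta> \<le> \<delta>'" "0 \<le> s" "s \<le> s'"
  shows "near_extremal c h L \<delta>' s'"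
proof -
  have "(c + \<delta>) * \<sigma> ^ DIM('a) \<le> (c + \<delta>') * \<sigma> ^ DIM('a)" if "\<sigma> \<ge> s'" for \<sigma>
    using assms that unfolding near_extremal_def by (intro mult_right_mono) auto
  moreover have "(c - \<delta>') * L ^ DIM('a) \<le> (c - \<delta>) * L ^ DIM('a)"
    using assms unfolding near_extremal_def by (intro mult_right_mono) auto
  ultimately show ?thesis
    using assms unfolding near_extremal_def by (meson order_trans)
qed

definition extremal_filter_at :: "real \<Rightarrow> real \<Rightarrow> ('a::euclidean_space \<Rightarrow> real) filter" where
  "extremal_filter_at c L = Abs_filter (\<lambda>P. \<exists>\<delta>>0. \<exists>s>0. \<forall>h. near_extremal c h L \<delta> s \<longrightarrow> P h)"

lemma eventually_extremal_filter_at: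
  "eventually P (extremal_filter_at c L) \<longleftrightarrow> (\<exists>\<delta>>0. \<exists>s>0. \<forall>h. near_extremal c h L \<delta> s \<longrightarrow> P h)"
  unfolding extremal_filter_at_def
proof (rule eventually_Abs_filter, rule is_filter.intro)
  fix P Q :: "('a \<Rightarrow> real) \<Rightarrow> bool"
  assume "\<exists>\<delta>>0. \<exists>s>0. \<forall>h. near_extremal c h L \<delta> s \<longrightarrow> P h"
    and "\<exists>\<delta>>0. \<exists>s>0. \<forall>h. near_extremal c h L \<delta> s \<longrightarrow> Q h"
  then obtain \<delta>1 s1 \<delta>2 s2 where "\<delta>1 > 0" "s1 > 0" "\<forall>h. near_extremal c h L \<delta>1 s1 \<longrightarrow> P h"
    "\<delta>2 > 0" "s2 > 0" "\<forall>h. near_extremal c h L \<delta>2 s2 \<longrightarrow> Q h"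
    by blast
  moreover from this have "\<forall>h. near_extremal c h L (min \<delta>1 \<delta>2) (min s1 s2) \<longrightarrow> P h \<and> Q h"
    using near_extremal_mono[of c _ L "min \<delta>1 \<delta>2" "min s1 s2" \<delta>1 s1]
      near_extremal_mono[of c _ L "min \<delta>1 \<delta>2" "min s1 s2" \<delta>2 s2]
    by simp blast
  ultimately show "\<exists>\<delta>>0. \<exists>s>0. \<forall>h. near_extremal c h L \<delta> s \<longrightarrow> P h \<and> Q h"
    by (meson min_less_iff_conj)
qed (auto intro: zero_less_one)

definition extremal_filter :: "real \<Rightarrow> ('a::euclidean_space \<Rightarrow> real) filter" where
  "extremal_filter c = Abs_filter (\<lambda>P. \<forall>\<^sub>F L in at_top. eventually P (extremal_filter_at c L))"

lemma eventually_extremal_filter: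
  "eventually P (extremal_filter c) \<longleftrightarrow> (\<forall>\<^sub>F L in at_top. eventually P (extremal_filter_at c L))"
  unfolding extremal_filter_def
proof (rule eventually_Abs_filter, rule is_filter.intro)
  fix P Q :: "('a \<Rightarrow> real) \<Rightarrow> bool"
  assume "\<forall>\<^sub>F L in at_top. eventually P (extremal_filter_at c L)"
    and "\<forall>\<^sub>F L in at_top. eventually Q (extremal_filter_at c L)"
  then show "\<forall>\<^sub>F L in at_top. \<forall>\<^sub>F h in extremal_filter_at c L. P h \<and> Q h"
    by eventually_elim (rule eventually_conj)
next
  fix P Q :: "('a \<Rightarrow> real) \<Rightarrow> bool"
  assume "\<forall>x. P x \<longrightarrow> Q x" "\<forall>\<^sub>F L in at_top. eventually P (extremal_filter_at c L)"
  then show "\<forall>\<^sub>F L in at_top. eventually Q (extremal_filter_at c L)"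
    by (elim eventually_mono) (auto elim: eventually_mono)
qed simp

lemma eventually_unit_density_extremal_filter_at: "\<forall>\<^sub>F h in extremal_filter_at c L. unit_density h"
  unfolding eventually_extremal_filter_at near_extremal_def by (auto intro: zero_less_one)

lemma eventually_unit_density_extremal_filter: "\<forall>\<^sub>F h in extremal_filter c. unit_density h"
  unfolding eventually_extremal_filter by (simp add: eventually_unit_density_extremal_filter_at)

lemma eventually_cube_integral_ge_extremal_filter_at:
  assumes "\<delta> > 0"
  shows "\<forall>\<^sub>F h in extremal_filter_at c L. (c - \<delta>) * L ^ DIM('a) \<le> (LINT x:cube (0::'a::euclidean_space) L|lebesgue. h x)"
  unfolding eventually_extremal_filter_at near_extremal_def using assms by (auto intro: zero_less_one)

lemma eventually_set_integral_compact_le: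
  fixes K :: "'a::euclidean_space set"
  assumes "compact K" "0 \<le> c" "\<eta> > 0"
  shows "\<forall>\<^sub>F h in extremal_filter_at c L. (LINT x:K|lebesgue. h x) \<le> c * measure lebesgue K + \<eta>"
proof -
  define \<eta>' where "\<eta>' = \<eta> / (2 * (c + 1))"
  define \<delta> where "\<delta> = min 1 (\<eta> / (2 * (measure lebesgue K + 1)))"
  have "\<eta>' > 0" "\<delta> > 0"
    using assms by (auto simp: \<eta>'_def \<delta>_def intro!: divide_pos_pos add_nonneg_pos)
  obtain s where "s > 0" and s: "measure lborel (cube_nbhd K s) \<le> measure lborel K + \<eta>'"
    using measure_cube_nbhd_le[OF assms(1) \<open>\<eta>' > 0\<close>] by blast
  have "(LINT x:K|lebesgue. h x) \<le> c * measure lebesgue K + \<eta>" if h: "near_extremal c h L \<delta> s" for h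
  proof -
    interpret unit_density h
      using h by (simp add: near_extremal_def)
    have "(LINT x:K|lebesgue. h x) \<le> (c + \<delta>) * measure lborel (cube_nbhd K s)"
    proof (rule set_integral_le_of_cube_bound[OF \<open>s > 0\<close>])
      show "(LINT x:cube y s|lebesgue. h x) \<le> (c + \<delta>) * s ^ DIM('a)" for y
        using h by (simp add: near_extremal_def)
    qed (use assms \<open>\<delta> > 0\<close> emeasure_compact_finite[OF compact_cube_nbhd[OF assms(1)]]
           in \<open>auto intro: borel_compact compact_cube_nbhd cube_subset_cube_nbhd[THEN subsetD]\<close>)
    also have "\<dots> \<le> (c + \<delta>) * (measure lebesgue K + \<eta>')"
      using s assms \<open>\<delta> > 0\<close> borel_compact[OF assms(1)] by (intro mult_left_mono) auto
    also have "\<dots> = c * measure lebesgue K + (c * \<eta>' + \<delta> * \<eta>') + \<delta> * measure lebesgue K"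
      by (simp add: algebra_simps)
    also have "c * \<eta>' + \<delta> * \<eta>' \<le> \<eta> / 2"
    proof -
      have "c * \<eta>' + \<delta> * \<eta>' \<le> (c + 1) * \<eta>'"
        using \<open>\<eta>' > 0\<close> by (simp add: \<delta>_def algebra_simps)
      moreover have "(c + 1) * \<eta>' = \<eta> / 2"
        using assms by (simp add: \<eta>'_def field_simps)
      ultimately show ?thesis by linarith
    qed
    also have "\<delta> * measure lebesgue K \<le> \<eta> / 2"
    proof -
      let ?m = "measure lebesgue K"
      have "\<delta> * ?m \<le> \<eta> / (2 * (?m + 1)) * ?m"
        by (intro mult_right_mono) (simp_all add: \<delta>_def)
      also have "\<dots> = \<eta> / 2 * (?m / (?m + 1))"
        by simp
      also have "\<dots> \<le> \<eta> / 2"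
        using assms by (intro mult_left_le) (simp_all add: add_nonneg_pos)
      finally show ?thesis .
    qed
    finally show ?thesis by simp
  qed
  then show ?thesis
    unfolding eventually_extremal_filter_at using \<open>\<delta> > 0\<close> \<open>s > 0\<close> by blast
qed

lemma eventually_set_integral_less_extremal_filter:
  fixes A :: "'a::euclidean_space set"
  assumes "A \<in> sets lebesgue" "bounded A" "0 \<le> c" "c * measure lebesgue A < a"
  shows "\<forall>\<^sub>F h in extremal_filter c. (LINT x:A|lebesgue. h x) < a"
proof -
  define \<eta> where "\<eta> = (a - c * measure lebesgue A) / 3"
  have "\<eta> > 0" using assms by (simp add: \<eta>_def)
  then obtain K where K: "closed K" "K \<subseteq> A" "A - K \<in> lmeasurable" "emeasure lebesgue (A - K) < \<eta>"
    using sets_lebesgue_inner_closed[OF assms(1)] by blast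
  have "compact K"
    using K assms(2) bounded_subset by (auto simp: compact_eq_bounded_closed)
  have "A \<in> lmeasurable" "K \<in> lmeasurable"
    using assms \<open>compact K\<close> by (auto intro: bounded_set_imp_lmeasurable lmeasurable_compact)
  have K_small: "measure lebesgue (A - K) < \<eta>"
    using K(3,4) by (simp add: emeasure_eq_measure2 ennreal_less_iff)
  have "\<forall>\<^sub>F h in extremal_filter c. unit_density h \<and> (LINT x:K|lebesgue. h x) \<le> c * measure lebesgue K + \<eta>"
    unfolding eventually_extremal_filter
    by (rule always_eventually, rule allI)
      (simp add: eventually_conj_iff eventually_unit_density_extremal_filter_at
        eventually_set_integral_compact_le[OF \<open>compact K\<close> assms(3) \<open>\<eta> > 0\<close>])
  then show ?thesis
  proof (rule eventually_mono, elim conjE)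
    fix h assume "unit_density h" and integral_K: "(LINT x:K|lebesgue. h x) \<le> c * measure lebesgue K + \<eta>"
    interpret unit_density h by fact
    have "(LINT x:A|lebesgue. h x) = (LINT x:K|lebesgue. h x) + (LINT x:A - K|lebesgue. h x)"
      using \<open>A \<in> lmeasurable\<close> \<open>K \<in> lmeasurable\<close> K(2) by (intro set_integral_Diff) (auto simp: fmeasurable_def)
    also have "\<dots> \<le> c * measure lebesgue K + \<eta> + measure lebesgue (A - K)"
      using integral_K K(3) set_integral_le_measure[of "A - K"] by (auto simp: fmeasurable_def)
    also have "\<dots> \<le> c * measure lebesgue A + 2 * \<eta>"
      using measure_mono_fmeasurable[OF K(2)] \<open>A \<in> lmeasurable\<close> \<open>K \<in> lmeasurable\<close> K_small assms(3)
      by (smt (verit) fmeasurableD mult_left_mono)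
    also have "\<dots> < a"
      using \<open>\<eta> > 0\<close> by (simp add: \<eta>_def field_simps)
    finally show "(LINT x:A|lebesgue. h x) < a" .
  qed
qed

text \<open>With \<open>B = cube 0 L\<close>: \<open>\<integral>\<^sub>A h = \<integral>\<^sub>B h - \<integral>\<^bsub>B-U\<^esub> h - \<integral>\<^bsub>U-A\<^esub> h\<close>, where the first term is
  large by near-extremality and the second is small by the upper bound on the compact set \<open>B - U\<close>.\<close>

lemma eventually_set_integral_greater_extremal_filter_at:
  fixes A U :: "'a::euclidean_space set"
  assumes "A \<in> sets lebesgue" "A \<subseteq> U" "open U" "U \<subseteq> cube 0 L" "0 \<le> L" "0 \<le> c" "\<eta> > 0"
    and U_small: "measure lebesgue (U - A) < \<eta>"
  shows "\<forall>\<^sub>F h in extremal_filter_at c L. c * measure lebesgue A - 3 * \<eta> < (LINT x:A|lebesgue. h x)"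
proof -
  let ?n = "DIM('a)" and ?B = "cube (0::'a) L"
  define \<delta> where "\<delta> = \<eta> / (L ^ ?n + 1)"
  have pos: "L ^ ?n + 1 > 0"
    using \<open>0 \<le> L\<close> by (simp add: add_nonneg_pos)
  then have "\<delta> > 0" "\<delta> * L ^ ?n \<le> \<eta>"
    using \<open>\<eta> > 0\<close> by (simp_all add: \<delta>_def pos_divide_le_eq algebra_simps)
  have "compact (?B - U)"
    using assms(3) by (simp add: Diff_eq compact_Int_closed compact_cube closed_Compl)
  have "bounded U"
    using assms(4) compact_cube bounded_subset compact_imp_bounded by blast
  then have "U \<in> lmeasurable" "A \<in> lmeasurable"
    using assms(1-3) bounded_subset[of U A] by (auto intro: bounded_set_imp_lmeasurable)
  then have measure_U: "measure lebesgue U = measure lebesgue A + measure lebesgue (U - A)"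
    using assms by (simp add: measurable_measure_Diff fmeasurable_def)
  have "measure lebesgue (?B - U) = measure lebesgue ?B - measure lebesgue U"
    using assms \<open>U \<in> lmeasurable\<close> by (intro measurable_measure_Diff cube_lmeasurable) auto
  then have measure_B_U: "measure lebesgue (?B - U) = L ^ ?n - measure lebesgue U"
    using \<open>0 \<le> L\<close> by (simp only: measure_lebesgue_cube)
  have "\<forall>\<^sub>F h in extremal_filter_at c L. unit_density h \<and>
      (LINT x:?B - U|lebesgue. h x) \<le> c * measure lebesgue (?B - U) + \<eta> \<and>
      (c - \<delta>) * L ^ ?n \<le> (LINT x:?B|lebesgue. h x)"
    using eventually_unit_density_extremal_filter_at
      eventually_set_integral_compact_le[OF \<open>compact (?B - U)\<close> \<open>0 \<le> c\<close> \<open>\<eta> > 0\<close>]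
      eventually_cube_integral_ge_extremal_filter_at[OF \<open>\<delta> > 0\<close>]
    by (intro eventually_conj)
  then show ?thesis
  proof (rule eventually_mono, elim conjE)
    fix h assume "unit_density h"
      and outside: "(LINT x:?B - U|lebesgue. h x) \<le> c * measure lebesgue (?B - U) + \<eta>"
      and cube: "(c - \<delta>) * L ^ ?n \<le> (LINT x:?B|lebesgue. h x)"
    interpret unit_density h by fact
    have "(LINT x:?B|lebesgue. h x) = (LINT x:U|lebesgue. h x) + (LINT x:?B - U|lebesgue. h x)"
      using cube_lmeasurable[of 0 L] assms(3,4) by (intro set_integral_Diff) (auto simp: fmeasurable_def)
    moreover have "(LINT x:U|lebesgue. h x) = (LINT x:A|lebesgue. h x) + (LINT x:U - A|lebesgue. h x)"
      using \<open>U \<in> lmeasurable\<close> assms(1,2) by (intro set_integral_Diff) (auto simp: fmeasurable_def)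
    moreover have "(LINT x:U - A|lebesgue. h x) \<le> measure lebesgue (U - A)"
      using fmeasurable_Diff[OF \<open>U \<in> lmeasurable\<close> assms(1)]
      by (intro set_integral_le_measure) (auto simp: fmeasurable_def)
    moreover have "c * measure lebesgue A \<le> c * measure lebesgue U"
      using measure_U \<open>0 \<le> c\<close> by (simp add: mult_left_mono)
    ultimately show "c * measure lebesgue A - 3 * \<eta> < (LINT x:A|lebesgue. h x)"
      using cube outside measure_B_U U_small \<open>\<delta> * L ^ ?n \<le> \<eta>\<close>
      by (simp add: algebra_simps)
  qed
qed

lemma eventually_set_integral_greater_extremal_filter:
  fixes A :: "'a::euclidean_space set"
  assumes "A \<in> sets lebesgue" "bounded A" "0 \<le> c" "a < c * measure lebesgue A"
  shows "\<forall>\<^sub>F h in extremal_filter c. a < (LINT x:A|lebesgue. h x)"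
proof -
  define \<eta> where "\<eta> = (c * measure lebesgue A - a) / 3"
  have "\<eta> > 0" using assms by (simp add: \<eta>_def)
  then obtain U0 where U0: "open U0" "A \<subseteq> U0" "U0 - A \<in> lmeasurable" "emeasure lebesgue (U0 - A) < \<eta>"
    using sets_lebesgue_outer_open[OF assms(1)] by blast
  obtain r where "r > 0" "A \<subseteq> ball 0 r"
    using bounded_subset_ballD[OF assms(2)] by blast
  define U where "U = U0 \<inter> ball 0 r"
  have "open U" "A \<subseteq> U"
    using U0 \<open>A \<subseteq> ball 0 r\<close> by (auto simp: U_def)
  have "measure lebesgue (U - A) \<le> measure lebesgue (U0 - A)"
    using U0 assms(1) by (intro measure_mono_fmeasurable) (auto simp: U_def)
  also have "\<dots> < \<eta>"
    using U0(3,4) by (simp add: emeasure_eq_measure2 ennreal_less_iff)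
  finally have U_small: "measure lebesgue (U - A) < \<eta>" .
  have "U \<subseteq> cube 0 L" if "2 * r \<le> L" for L
    using ball_subset_cube[of 0 r] cube_mono[OF that, of 0] by (auto simp: U_def)
  then have "\<forall>\<^sub>F L in at_top. \<forall>\<^sub>F h in extremal_filter_at c L.
      c * measure lebesgue A - 3 * \<eta> < (LINT x:A|lebesgue. h x)"
    using eventually_ge_at_top[of "2 * r"] \<open>r > 0\<close>
    by (elim eventually_mono)
      (intro eventually_set_integral_greater_extremal_filter_at[OF assms(1) \<open>A \<subseteq> U\<close> \<open>open U\<close> _ _
          \<open>0 \<le> c\<close> \<open>\<eta> > 0\<close> U_small], auto)
  moreover have "c * measure lebesgue A - 3 * \<eta> = a"
    by (simp add: \<eta>_def field_simps)
  ultimately show ?thesis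
    unfolding eventually_extremal_filter by simp
qed

lemma tendsto_set_integral_extremal_filter:
  fixes A :: "'a::euclidean_space set"
  assumes "A \<in> sets lebesgue" "bounded A" "0 \<le> c"
  shows "((\<lambda>h. LINT x:A|lebesgue. h x) \<longlongrightarrow> c * measure lebesgue A) (extremal_filter c)"
  using assms
  by (intro order_tendstoI eventually_set_integral_less_extremal_filter
      eventually_set_integral_greater_extremal_filter)

lemma (in unit_density) abs_integral_mult_diff_le:
  assumes "0 \<le> c" "c \<le> 1" "integrable lebesgue g" "integrable lebesgue g'"
  shows "\<bar>((\<integral>x. h x * g x \<partial>lebesgue) - c * integral\<^sup>L lebesgue g)
          - ((\<integral>x. h x * g' x \<partial>lebesgue) - c * integral\<^sup>L lebesgue g')\<bar>
         \<le> (\<integral>x. \<bar>g x - g' x\<bar> \<partial>lebesgue)"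
proof -
  have "((\<integral>x. h x * g x \<partial>lebesgue) - c * integral\<^sup>L lebesgue g)
         - ((\<integral>x. h x * g' x \<partial>lebesgue) - c * integral\<^sup>L lebesgue g')
       = (\<integral>x. (h x - c) * (g x - g' x) \<partial>lebesgue)"
    using assms integrable_mult by (simp add: algebra_simps)
  also have "\<bar>\<dots>\<bar> \<le> (\<integral>x. \<bar>(h x - c) * (g x - g' x)\<bar> \<partial>lebesgue)"
    by (rule integral_abs_bound)
  also have "\<dots> \<le> (\<integral>x. \<bar>g x - g' x\<bar> \<partial>lebesgue)"
  proof (rule integral_mono)
    show "integrable lebesgue (\<lambda>x. \<bar>(h x - c) * (g x - g' x)\<bar>)"
      using assms integrable_mult by (simp add: algebra_simps)
    show "\<bar>(h x - c) * (g x - g' x)\<bar> \<le> \<bar>g x - g' x\<bar>" for x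
      using assms nonneg[of x] le_one[of x] by (simp add: abs_mult mult_left_le_one_le)
  qed (use assms in simp)
  finally show ?thesis .
qed

lemma tendsto_integral_mult_L1_approx:
  assumes unit: "\<forall>\<^sub>F h in F. unit_density h" and "0 \<le> c" "c \<le> 1" "integrable lebesgue g"
    and approx: "\<And>e. e > 0 \<Longrightarrow> \<exists>g'. integrable lebesgue g' \<and> (\<integral>x. \<bar>g x - g' x\<bar> \<partial>lebesgue) < e \<and>
      ((\<lambda>h. \<integral>x. h x * g' x \<partial>lebesgue) \<longlongrightarrow> c * integral\<^sup>L lebesgue g') F"
  shows "((\<lambda>h. \<integral>x. h x * g x \<partial>lebesgue) \<longlongrightarrow> c * integral\<^sup>L lebesgue g) F"
  unfolding tendsto_iff
proof (intro allI impI)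
  fix e :: real assume "e > 0"
  then obtain g' where g': "integrable lebesgue g'" "(\<integral>x. \<bar>g x - g' x\<bar> \<partial>lebesgue) < e / 2"
    and lim: "((\<lambda>h. \<integral>x. h x * g' x \<partial>lebesgue) \<longlongrightarrow> c * integral\<^sup>L lebesgue g') F"
    using approx[of "e / 2"] by auto
  have "\<forall>\<^sub>F h in F. dist (\<integral>x. h x * g' x \<partial>lebesgue) (c * integral\<^sup>L lebesgue g') < e / 2"
    using lim \<open>e > 0\<close> unfolding tendsto_iff by (meson half_gt_zero)
  with unit show "\<forall>\<^sub>F h in F. dist (\<integral>x. h x * g x \<partial>lebesgue) (c * integral\<^sup>L lebesgue g) < e"
  proof eventually_elim
    case (elim h)
    then show ?case
      using unit_density.abs_integral_mult_diff_le[OF elim(1) assms(2-4) g'(1)] g'(2)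
      unfolding dist_real_def by linarith
  qed
qed

lemma tendsto_integral_bounded_indicator_extremal_filter:
  fixes B :: "'a::euclidean_space set"
  assumes "B \<in> sets lebesgue" "bounded B" "0 \<le> c"
  shows "((\<lambda>h. \<integral>x. h x * (indicator B x *\<^sub>R a) \<partial>lebesgue)
           \<longlongrightarrow> c * (\<integral>x. indicator B x *\<^sub>R a \<partial>lebesgue)) (extremal_filter c)"
proof -
  have "(\<lambda>h. \<integral>x. h x * (indicator B x *\<^sub>R a) \<partial>lebesgue) = (\<lambda>h. a * (LINT x:B|lebesgue. h x))"
    unfolding set_lebesgue_integral_def integral_mult_right_zero[symmetric]
    by (intro ext Bochner_Integration.integral_cong) (auto simp: indicator_def)
  moreover have "c * (\<integral>x. indicator B x *\<^sub>R a \<partial>lebesgue) = a * (c * measure lebesgue B)"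
    using bounded_set_imp_lmeasurable[OF assms(2,1)]
    by (simp add: integral_mult_left_zero fmeasurable_def)
  ultimately show ?thesis
    using tendsto_set_integral_extremal_filter[OF assms] by (simp only: tendsto_mult_left)
qed

lemma tendsto_integral_indicator_extremal_filter:
  fixes A :: "'a::euclidean_space set"
  assumes "0 \<le> c" "c \<le> 1" "A \<in> sets lebesgue" "emeasure lebesgue A < \<infinity>"
  shows "((\<lambda>h. \<integral>x. h x * (indicator A x *\<^sub>R a) \<partial>lebesgue)
           \<longlongrightarrow> c * (\<integral>x. indicator A x *\<^sub>R a \<partial>lebesgue)) (extremal_filter c)"
proof (rule tendsto_integral_mult_L1_approx[OF eventually_unit_density_extremal_filter assms(1,2)])
  show "integrable lebesgue (\<lambda>x. indicator A x *\<^sub>R a)"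
    using assms by (simp add: integrable_indicator_iff)
  fix e :: real assume "e > 0"
  define D where "D k = A - cube 0 (real k)" for k :: nat
  have "(\<lambda>k. measure lebesgue (D k)) \<longlonglongrightarrow> measure lebesgue (\<Inter>k. D k)"
  proof (rule Lim_measure_decseq)
    show "decseq D"
      unfolding decseq_def D_def by (intro allI impI Diff_mono order_refl cube_mono) simp
    show "emeasure lebesgue (D k) \<noteq> \<infinity>" for k
      using assms emeasure_mono[of "D k" A lebesgue] by (auto simp: D_def top_unique)
  qed (use assms in \<open>auto simp: D_def\<close>)
  moreover have "(\<Inter>k. D k) = {}"
    unfolding D_def using ex_nat_mem_cube by blast
  ultimately have "(\<lambda>k. \<bar>a\<bar> * measure lebesgue (D k)) \<longlonglongrightarrow> 0"
    using tendsto_mult_right_zero by force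
  then have "\<forall>\<^sub>F k in sequentially. \<bar>a\<bar> * measure lebesgue (D k) < e"
    using \<open>e > 0\<close> by (rule order_tendstoD(2))
  then obtain k where k: "\<bar>a\<bar> * measure lebesgue (D k) < e"
    by (auto dest: eventually_happens)
  define B where "B = A \<inter> cube 0 (real k)"
  have "B \<in> sets lebesgue" "bounded B"
    using assms compact_imp_bounded[OF compact_cube] by (auto simp: B_def intro: bounded_subset)
  moreover from this have "B \<in> lmeasurable"
    by (intro bounded_set_imp_lmeasurable)
  moreover have "(\<integral>x. \<bar>indicator A x *\<^sub>R a - indicator B x *\<^sub>R a\<bar> \<partial>lebesgue) = \<bar>a\<bar> * measure lebesgue (D k)"
  proof -
    have "(\<integral>x. \<bar>indicator A x *\<^sub>R a - indicator B x *\<^sub>R a\<bar> \<partial>lebesgue) = (\<integral>x. \<bar>a\<bar> * indicator (D k) x \<partial>lebesgue)"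
      by (rule Bochner_Integration.integral_cong) (auto simp: indicator_def B_def D_def)
    then show ?thesis
      using assms emeasure_mono[of "D k" A lebesgue] by (simp add: D_def less_top[symmetric])
  qed
  ultimately show "\<exists>g'. integrable lebesgue g' \<and> (\<integral>x. \<bar>indicator A x *\<^sub>R a - g' x\<bar> \<partial>lebesgue) < e \<and>
      ((\<lambda>h. \<integral>x. h x * g' x \<partial>lebesgue) \<longlongrightarrow> c * integral\<^sup>L lebesgue g') (extremal_filter c)"
    using k assms(1)
    by (intro exI[of _ "\<lambda>x. indicator B x *\<^sub>R a"] conjI tendsto_integral_bounded_indicator_extremal_filter)
      (auto simp: integrable_indicator_iff fmeasurable_def)
qed

theorem tendsto_integral_extremal_filter:
  fixes g :: "'a::euclidean_space \<Rightarrow> real"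
  assumes "0 \<le> c" "c \<le> 1" "integrable lebesgue g"
  shows "((\<lambda>h. \<integral>x. h x * g x \<partial>lebesgue) \<longlongrightarrow> c * integral\<^sup>L lebesgue g) (extremal_filter c)"
  using assms(3)
proof induct
  case (base A a)
  then show ?case
    using tendsto_integral_indicator_extremal_filter[OF assms(1,2)] by blast
next
  case (add f g)
  have "\<forall>\<^sub>F h in extremal_filter c. (\<integral>x. h x * (f x + g x) \<partial>lebesgue)
      = (\<integral>x. h x * f x \<partial>lebesgue) + (\<integral>x. h x * g x \<partial>lebesgue)"
    using eventually_unit_density_extremal_filter
    by eventually_elim (simp add: distrib_left unit_density.integrable_mult add)
  moreover have "c * (\<integral>x. f x + g x \<partial>lebesgue) = c * integral\<^sup>L lebesgue f + c * integral\<^sup>L lebesgue g"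
    using add by (simp add: distrib_left)
  ultimately show ?case
    using tendsto_add[OF add(2,4)] by (simp add: tendsto_cong)
next
  case (lim f s)
  show ?case
  proof (rule tendsto_integral_mult_L1_approx[OF eventually_unit_density_extremal_filter assms(1,2) lim(5)])
    fix e :: real assume "e > 0"
    define S where "S i x = \<bar>f x - s i x\<bar>" for i x
    define W where "W x = 3 * \<bar>f x\<bar>" for x
    have W: "integrable lebesgue W"
      using lim(5) by (simp add: W_def[abs_def])
    have S: "S i \<in> borel_measurable lebesgue" for i
      using lim(1,5) unfolding S_def by measurable
    have "AE x in lebesgue. (\<lambda>i. S i x) \<longlonglongrightarrow> 0"
      using lim(3) unfolding S_def by (auto intro!: AE_I2 tendsto_rabs_zero tendsto_eq_intros)
    moreover have "AE x in lebesgue. norm (S i x) \<le> W x" for i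
      using lim(4) unfolding S_def W_def by (auto intro!: AE_I2) (smt (verit) real_norm_def)
    ultimately have "(\<lambda>i. integral\<^sup>L lebesgue (S i)) \<longlonglongrightarrow> integral\<^sup>L lebesgue (\<lambda>x::'a. 0)"
      by (intro integral_dominated_convergence[OF _ S W]) auto
    then have "(\<lambda>i. \<integral>x. \<bar>f x - s i x\<bar> \<partial>lebesgue) \<longlonglongrightarrow> 0"
      by (simp add: S_def[abs_def])
    then have "\<forall>\<^sub>F i in sequentially. (\<integral>x. \<bar>f x - s i x\<bar> \<partial>lebesgue) < e"
      using \<open>e > 0\<close> by (intro order_tendstoD(2)) auto
    then obtain i where "(\<integral>x. \<bar>f x - s i x\<bar> \<partial>lebesgue) < e"
      by (auto dest: eventually_happens)
    then show "\<exists>g'. integrable lebesgue g' \<and> (\<integral>x. \<bar>f x - g' x\<bar> \<partial>lebesgue) < e \<and>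
        ((\<lambda>h. \<integral>x. h x * g' x \<partial>lebesgue) \<longlongrightarrow> c * integral\<^sup>L lebesgue g') (extremal_filter c)"
      using lim(1,2) by blast
  qed
qed

section \<open>Affine changes of variables and the weak-* topology\<close>

lemma lebesgue_measurable_affine: "(\<lambda>x::'a::euclidean_space. w + t *\<^sub>R x) \<in> lebesgue \<rightarrow>\<^sub>M lebesgue"
proof (cases "t = 0")
  case False
  have "(\<lambda>x::'a. w + (\<Sum>j\<in>Basis. (t * (x \<bullet> j)) *\<^sub>R j)) = (\<lambda>x. w + t *\<^sub>R x)"
    unfolding scaleR_scaleR[symmetric] scaleR_sum_right[symmetric] euclidean_representation ..
  then show ?thesis
    using lebesgue_affine_measurable[of "\<lambda>_. t" w] False by simp
qed simp

lemma AE_lebesgue_affine: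
  fixes P :: "'a::euclidean_space \<Rightarrow> bool"
  assumes "t \<noteq> 0" and "AE x in lebesgue. P x"
  shows "AE x in lebesgue. P (w + t *\<^sub>R x)"
proof -
  obtain N where N: "{x \<in> space lebesgue. \<not> P x} \<subseteq> N" "N \<in> null_sets lebesgue"
    by (rule AE_E[OF assms(2)]) blast
  define T where "T = (\<lambda>x::'a. w + t *\<^sub>R x)"
  have preimage: "T -` N = (\<lambda>y. (1/t) *\<^sub>R y + (- (1/t) *\<^sub>R w)) ` N"
  proof (intro equalityI subsetI)
    fix x assume "x \<in> T -` N"
    moreover have "x = (1/t) *\<^sub>R T x + (- (1/t) *\<^sub>R w)"
      using assms(1) by (simp add: T_def scaleR_add_right)
    ultimately show "x \<in> (\<lambda>y. (1/t) *\<^sub>R y + (- (1/t) *\<^sub>R w)) ` N"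
      by blast
  next
    fix x assume "x \<in> (\<lambda>y. (1/t) *\<^sub>R y + (- (1/t) *\<^sub>R w)) ` N"
    then obtain y where "y \<in> N" "x = (1/t) *\<^sub>R y + (- (1/t) *\<^sub>R w)"
      by blast
    moreover from this have "T x = y"
      using assms(1) by (simp add: T_def scaleR_add_right scaleR_diff_right)
    ultimately show "x \<in> T -` N"
      by simp
  qed
  have "emeasure lebesgue (T -` N) = \<bar>1/t\<bar> ^ DIM('a) * emeasure lebesgue N"
    unfolding preimage by (rule emeasure_lebesgue_affine)
  also have "\<dots> = 0"
    using N(2) by (simp add: null_setsD1)
  finally have "T -` N \<in> null_sets lebesgue"
    using measurable_sets[OF lebesgue_measurable_affine, of N w t] N(2) by (simp add: T_def null_sets_def)
  moreover have "{x \<in> space lebesgue. \<not> P (w + t *\<^sub>R x)} \<subseteq> T -` N"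
    using N(1) by (auto simp: T_def)
  ultimately show ?thesis
    by (rule AE_I')
qed

lemma Sd_compose_affine:
  assumes "f \<in> Sd" "t \<noteq> 0"
  shows "(\<lambda>x. f (w + t *\<^sub>R x)) \<in> Sd"
  using assms measurable_compose[OF lebesgue_measurable_affine[of w t], of f borel]
    AE_lebesgue_affine[of t "\<lambda>x. 0 \<le> f x \<and> f x \<le> 1" w]
  by (simp add: Sd_def o_def)

lemma set_integral_cube_affine:
  fixes F :: "'a::euclidean_space \<Rightarrow> real"
  assumes [measurable]: "F \<in> borel_measurable borel" and "t > 0"
  shows "(LINT x:cube (w + t *\<^sub>R y) (t * \<sigma>)|lebesgue. F x)
    = t ^ DIM('a) * (LINT x:cube y \<sigma>|lebesgue. F (w + t *\<^sub>R x))"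
proof -
  let ?C = "cube (w + t *\<^sub>R y) (t * \<sigma>)"
  define G where "G x = indicator ?C x *\<^sub>R F x" for x
  have [measurable]: "G \<in> borel_measurable borel"
    unfolding G_def by measurable
  have "(LINT x:?C|lebesgue. F x) = integral\<^sup>L lborel G"
    unfolding set_lebesgue_integral_def G_def by (rule integral_completion) measurable
  also have "\<dots> = integral\<^sup>L (density (distr lborel borel (\<lambda>x. w + t *\<^sub>R x)) (\<lambda>_. ennreal (\<bar>t\<bar> ^ DIM('a)))) G"
    using lborel_affine[of t w] \<open>t > 0\<close> by simp
  also have "\<dots> = integral\<^sup>L lborel (\<lambda>x. \<bar>t\<bar> ^ DIM('a) *\<^sub>R G (w + t *\<^sub>R x))"
    by (subst integral_density) (auto simp: integral_distr)
  also have "\<dots> = t ^ DIM('a) * integral\<^sup>L lborel (\<lambda>x. indicator (cube y \<sigma>) x *\<^sub>R F (w + t *\<^sub>R x))"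
    using \<open>t > 0\<close> affine_mem_cube_iff[OF \<open>t > 0\<close>, of w _ y \<sigma>] by (simp add: G_def indicator_def)
  also have "integral\<^sup>L lborel (\<lambda>x. indicator (cube y \<sigma>) x *\<^sub>R F (w + t *\<^sub>R x))
      = (LINT x:cube y \<sigma>|lebesgue. F (w + t *\<^sub>R x))"
    unfolding set_lebesgue_integral_def by (rule integral_completion[symmetric]) measurable
  finally show ?thesis .
qed

lemma weakstar_openin_AE_cong:
  assumes "openin weakstar V" "k \<in> V" "h \<in> Sd" "AE x in lebesgue. h x = k x"
  shows "h \<in> V"
proof -
  define \<pi> where "\<pi> f = restrict (\<lambda>g. LINT x|lebesgue. f x * g x) {g. integrable lebesgue g}"
    for f :: "'a \<Rightarrow> real"
  obtain U where V: "V = \<pi> -` U \<inter> Sd"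
    using assms(1) unfolding weakstar_def openin_pullback_topology \<pi>_def by blast
  have "\<pi> h = \<pi> k"
  proof (rule ext)
    fix g
    have "(LINT x|lebesgue. h x * g x) = (LINT x|lebesgue. k x * g x)"
      if "integrable lebesgue g"
      using assms(2-4) that by (intro integral_cong_AE) (auto simp: V Sd_def)
    then show "\<pi> h g = \<pi> k g"
      by (simp add: \<pi>_def)
  qed
  with assms(2,3) show ?thesis
    by (simp add: V)
qed

lemma eventually_mem_weakstar_openin:
  fixes h :: "'i \<Rightarrow> 'a::euclidean_space \<Rightarrow> real"
  assumes "openin weakstar V" "k \<in> V" "\<forall>\<^sub>F i in F. h i \<in> Sd"
    and lim: "\<And>g. integrable lebesgue g \<Longrightarrow>
      ((\<lambda>i. LINT x|lebesgue. h i x * g x) \<longlongrightarrow> (LINT x|lebesgue. k x * g x)) F"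
  shows "\<forall>\<^sub>F i in F. h i \<in> V"
proof -
  define I where "I = {g::'a \<Rightarrow> real. integrable lebesgue g}"
  define \<pi> where "\<pi> f = restrict (\<lambda>g. LINT x|lebesgue. f x * g x) I" for f :: "'a \<Rightarrow> real"
  obtain U where U: "openin (product_topology (\<lambda>_. euclideanreal) I) U" and V: "V = \<pi> -` U \<inter> Sd"
    using assms(1) unfolding weakstar_def openin_pullback_topology \<pi>_def I_def by blast
  have "\<pi> k \<in> U"
    using assms(2) by (simp add: V)
  then obtain X where X: "\<pi> k \<in> (\<Pi>\<^sub>E g\<in>I. X g)" "\<And>g. openin euclideanreal (X g)"
    "finite {g. X g \<noteq> topspace euclideanreal}" "(\<Pi>\<^sub>E g\<in>I. X g) \<subseteq> U"
    using product_topology_open_contains_basis[OF U \<open>\<pi> k \<in> U\<close>] by blast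
  define G where "G = {g \<in> I. X g \<noteq> topspace euclideanreal}"
  have "\<forall>\<^sub>F i in F. \<pi> (h i) g \<in> X g" if "g \<in> G" for g
  proof -
    have "(LINT x|lebesgue. k x * g x) \<in> X g" "open (X g)" "integrable lebesgue g"
      using that X(1) X(2)[of g] by (auto simp: G_def I_def \<pi>_def PiE_iff)
    then have "\<forall>\<^sub>F i in F. (LINT x|lebesgue. h i x * g x) \<in> X g"
      using lim topological_tendstoD by blast
    then show ?thesis
      using that by (simp add: G_def \<pi>_def)
  qed
  then have "\<forall>\<^sub>F i in F. \<forall>g\<in>G. \<pi> (h i) g \<in> X g"
    using X(3) by (intro eventually_ball_finite) (auto simp: G_def)
  with assms(3) show ?thesis
  proof eventually_elim
    case (elim i)
    then have "\<pi> (h i) \<in> (\<Pi>\<^sub>E g\<in>I. X g)"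
      by (auto simp: PiE_iff \<pi>_def G_def)
    with elim X(4) show ?case
      by (auto simp: V)
  qed
qed

lemma T_invariant_transl_mem:
  assumes "T_invariant V" "transl v h \<in> V"
  shows "h \<in> V"
proof -
  have "transl (-v) (transl v h) = h"
    by (simp add: transl_def)
  with assms show ?thesis
    unfolding T_invariant_def by (metis image_eqI)
qed

lemma Sd_AE_eq_unit_density:
  assumes "f \<in> Sd"
  obtains g where "unit_density g" "AE x in lebesgue. f x = g x"
proof -
  have "f \<in> borel_measurable lebesgue" and bounds: "AE x in lebesgue. 0 \<le> f x \<and> f x \<le> 1"
    using assms by (auto simp: Sd_def)
  then obtain g' where [measurable]: "g' \<in> borel_measurable lborel" and "AE x in lborel. f x = g' x"
    using completion_ex_borel_measurable_real by blast
  define g where "g x = max 0 (min 1 (g' x))" for x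
  have [measurable]: "g \<in> borel_measurable borel"
    unfolding g_def by measurable
  then have "unit_density g"
    by unfold_locales (auto simp: g_def)
  moreover have "AE x in lebesgue. f x = g x"
    using AE_completion[OF \<open>AE x in lborel. f x = g' x\<close>] bounds
    by eventually_elim (auto simp: g_def)
  ultimately show ?thesis ..
qed

lemma upper_banach_density_AE_cong:
  assumes "f \<in> borel_measurable lebesgue" "g \<in> borel_measurable lebesgue"
    and "AE x in lebesgue. f x = g x"
  shows "upper_banach_density f = upper_banach_density g"
proof -
  have "(LINT x:E|lebesgue. f x) = (LINT x:E|lebesgue. g x)" if "E \<in> sets lebesgue" for E
    unfolding set_lebesgue_integral_def using assms that by (intro integral_cong_AE) auto
  then show ?thesis
    unfolding upper_banach_density_def by simp
qed

section \<open>Rescaled cubes of nearly maximal density\<close>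

context unit_density
begin

lemma unit_density_affine: "unit_density (\<lambda>x. h (w + t *\<^sub>R x))"
  by unfold_locales (simp_all add: nonneg le_one)

lemma eventually_near_extremal_rescaled:
  assumes "L > 0" "\<delta> > 0" "s > 0"
  shows "\<forall>\<^sub>F t in at_top. t > 0 \<and>
    (\<exists>y. near_extremal (upper_banach_density h) (\<lambda>x. h (y + t *\<^sub>R x)) L \<delta> s)"
proof -
  let ?n = "DIM('a)" and ?c = "upper_banach_density h"
  obtain T0 where T0: "\<And>T v. T \<ge> T0 \<Longrightarrow> (LINT x:cube v T|lebesgue. h x) \<le> (?c + \<delta>) * T ^ ?n"
    using eventually_cube_integral_le[OF \<open>\<delta> > 0\<close>] by (auto simp: eventually_at_top_linorder)
  have "t > 0 \<and> (\<exists>y. near_extremal ?c (\<lambda>x. h (y + t *\<^sub>R x)) L \<delta> s)" if t: "t \<ge> max (T0 / s) 1" for t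
  proof -
    have "t > 0" "T0 \<le> t * s"
      using t \<open>s > 0\<close> by (auto simp: pos_divide_le_eq)
    obtain y where y: "(?c - \<delta>) * (t * L) ^ ?n \<le> (LINT x:cube y (t * L)|lebesgue. h x)"
      using ex_cube_integral_ge[of "t * L" \<delta>] \<open>t > 0\<close> assms by auto
    have "(LINT x:cube y' \<sigma>|lebesgue. h (y + t *\<^sub>R x)) \<le> (?c + \<delta>) * \<sigma> ^ ?n" if "\<sigma> \<ge> s" for y' \<sigma>
    proof -
      have "t ^ ?n * (LINT x:cube y' \<sigma>|lebesgue. h (y + t *\<^sub>R x)) = (LINT x:cube (y + t *\<^sub>R y') (t * \<sigma>)|lebesgue. h x)"
        using set_integral_cube_affine[OF borel_measurable \<open>t > 0\<close>] by simp
      also have "\<dots> \<le> t ^ ?n * ((?c + \<delta>) * \<sigma> ^ ?n)"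
        using T0[of "t * \<sigma>"] \<open>T0 \<le> t * s\<close> \<open>t > 0\<close> that
        by (smt (verit) mult_left_mono power_mult_distrib mult.left_commute)
      finally show ?thesis
        using \<open>t > 0\<close> by simp
    qed
    moreover have "(?c - \<delta>) * L ^ ?n \<le> (LINT x:cube 0 L|lebesgue. h (y + t *\<^sub>R x))"
    proof -
      have "t ^ ?n * ((?c - \<delta>) * L ^ ?n) \<le> (LINT x:cube (y + t *\<^sub>R 0) (t * L)|lebesgue. h x)"
        using y by (simp add: power_mult_distrib mult_ac)
      also have "\<dots> = t ^ ?n * (LINT x:cube 0 L|lebesgue. h (y + t *\<^sub>R x))"
        by (rule set_integral_cube_affine[OF borel_measurable \<open>t > 0\<close>])
      finally show ?thesis
        using \<open>t > 0\<close> by simp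
    qed
    ultimately show ?thesis
      using \<open>t > 0\<close> \<open>L > 0\<close> unit_density_affine by (auto simp: near_extremal_def)
  qed
  then show ?thesis
    unfolding eventually_at_top_linorder by blast
qed

end

lemma dilate_mem_if_rescaled_mem:
  assumes "openin weakstar V" "T_invariant V" "f \<in> Sd" "AE x in lebesgue. f x = g x"
    and "t > 0" "(\<lambda>x. g (y + t *\<^sub>R x)) \<in> V"
  shows "dilate t f \<in> V"
proof -
  have "transl ((1 / t) *\<^sub>R y) (dilate t f) = (\<lambda>x. f (y + t *\<^sub>R x))"
    using \<open>t > 0\<close> by (simp add: transl_def dilate_def algebra_simps)
  moreover have "(\<lambda>x. f (y + t *\<^sub>R x)) \<in> V"
    using assms Sd_compose_affine[OF assms(3), of t y] AE_lebesgue_affine[of t "\<lambda>x. f x = g x" y]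
    by (intro weakstar_openin_AE_cong[OF assms(1,6)]) auto
  ultimately show ?thesis
    using T_invariant_transl_mem[OF assms(2)] by metis
qed

theorem theorem2p1:
  fixes f :: "'a::euclidean_space \<Rightarrow> real" and V :: "('a \<Rightarrow> real) set"
  assumes "f \<in> Sd"
    and "openin weakstar V"
    and "T_invariant V"
    and "(\<lambda>x. upper_banach_density f) \<in> V"
  shows "\<forall>\<^sub>F t in at_top. dilate t f \<in> V"
proof -
  obtain u where "unit_density u" and f_u: "AE x in lebesgue. f x = u x"
    using Sd_AE_eq_unit_density[OF assms(1)] .
  interpret unit_density u by fact
  define c where "c = upper_banach_density u"
  have c_eq: "upper_banach_density f = c"
    unfolding c_def using assms(1) f_u by (intro upper_banach_density_AE_cong) (auto simp: Sd_def)
  have "\<forall>\<^sub>F h in extremal_filter c. h \<in> V"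
  proof (rule eventually_mem_weakstar_openin[OF assms(2)])
    show "(\<lambda>x. c) \<in> V"
      using assms(4) by (simp add: c_eq)
    show "\<forall>\<^sub>F h in extremal_filter c. h \<in> Sd"
      using eventually_unit_density_extremal_filter by (rule eventually_mono) (rule unit_density.in_Sd)
    show "((\<lambda>h. LINT x|lebesgue. h x * g x) \<longlongrightarrow> (LINT x|lebesgue. c * g x)) (extremal_filter c)"
      if "integrable lebesgue g" for g
      using tendsto_integral_extremal_filter[OF _ _ that] upper_banach_density_bounds by (simp add: c_def)
  qed
  then obtain L \<delta> s where "L > 0" "\<delta> > 0" "s > 0" and near_extremal_in_V: "\<And>h. near_extremal c h L \<delta> s \<Longrightarrow> h \<in> V"
    unfolding eventually_extremal_filter eventually_extremal_filter_at eventually_at_top_linorder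
    by (metis max.cobounded1 max.cobounded2 zero_less_one less_le_trans)
  have "\<forall>\<^sub>F t in at_top. t > 0 \<and> (\<exists>y. near_extremal c (\<lambda>x. u (y + t *\<^sub>R x)) L \<delta> s)"
    unfolding c_def using \<open>L > 0\<close> \<open>\<delta> > 0\<close> \<open>s > 0\<close> by (rule eventually_near_extremal_rescaled)
  then show ?thesis
    by eventually_elim (metis dilate_mem_if_rescaled_mem[OF assms(2,3,1) f_u] near_extremal_in_V)
qed

end
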